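(* Let $(a_i)_{i\ge0},(b_i)_{i\ge0},(c_i)_{i\ge0},(d_i)_{i\ge0}$ be integer sequences with all $b_i\neq0$, $d_i\ne 0$, and consider the bifurcating continued fraction with partial quotients $\alpha_i=a_i/b_i$ and $\beta_i=c_i/d_i$. Define rational numbers $A_n,B_n,C_n$ (together with $A_{n-1},A_{n-2}$, etc.) for $n\ge0$ by $$\begin{pmatrix}\alpha_0&1&0\\ \beta_0&0&1\\1&0&0\end{pmatrix}\cdots\begin{pmatrix}\alpha_n&1&0\\ \beta_n&0&1\\1&0&0\end{pmatrix}=\begin{pmatrix}A_n&A_{n-1}&A_{n-2}\\ B_n&B_{n-1}&B_{n-2}\\ C_n&C_{n-1}&C_{n-2}\end{pmatrix},$$ so that the $n$th convergent is $(A_n/C_n,B_n/C_n)$. Define $s_{-1}=1/d_0$, $s_0=a_0$, $s_1=a_0a_1d_1+b_0b_1c_1$ and, for $n\ge2$, $$s_n=a_nd_ns_{n-1}+b_nb_{n-1}c_nd_{n-1}s_{n-2}+b_nb_{n-1}b_{n-2}d_nd_{n-1}d_{n-2}s_{n-3},$$ and define $t_0=b_0$, $t_n=b_0\prod_{i=1}^n b_id_i$ for $n\ge1$. Then $A_n=s_n/t_n$ for every $n\ge0$.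
   Context: Equivalently, $A_{-2}=0$, $A_{-1}=1$, $A_0=\alpha_0$, and $A_n=\alpha_nA_{n-1}+\beta_nA_{n-2}+A_{n-3}$ for $n\ge1$ (with analogous recurrences for $B_n$, $C_n$). *)

theory Defs
  imports Complex_Main
begin

text \<open>3x3 matrices are represented as functions nat => nat => rat with indices 0,1,2.\<close>

definition mat3_mult :: "(nat \<Rightarrow> nat \<Rightarrow> rat) \<Rightarrow> (nat \<Rightarrow> nat \<Rightarrow> rat) \<Rightarrow> (nat \<Rightarrow> nat \<Rightarrow> rat)" where
  "mat3_mult M N = (\<lambda>i j. \<Sum>k<3. M i k * N k j)"

definition bcf_matrix :: "rat \<Rightarrow> rat \<Rightarrow> (nat \<Rightarrow> nat \<Rightarrow> rat)" where
  "bcf_matrix \<alpha> \<beta> = (\<lambda>i j.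
     if i = 0 then (if j = 0 then \<alpha> else if j = 1 then 1 else 0)
     else if i = 1 then (if j = 0 then \<beta> else if j = 1 then 0 else 1)
     else (if j = 0 then 1 else 0))"

fun bcf_prod :: "(nat \<Rightarrow> int) \<Rightarrow> (nat \<Rightarrow> int) \<Rightarrow> (nat \<Rightarrow> int) \<Rightarrow> (nat \<Rightarrow> int) \<Rightarrow> nat \<Rightarrow> (nat \<Rightarrow> nat \<Rightarrow> rat)" where
  "bcf_prod a b c d 0 = bcf_matrix (of_int (a 0) / of_int (b 0)) (of_int (c 0) / of_int (d 0))"
| "bcf_prod a b c d (Suc n) = mat3_mult (bcf_prod a b c d n)
     (bcf_matrix (of_int (a (Suc n)) / of_int (b (Suc n))) (of_int (c (Suc n)) / of_int (d (Suc n))))"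

definition bcf_A :: "(nat \<Rightarrow> int) \<Rightarrow> (nat \<Rightarrow> int) \<Rightarrow> (nat \<Rightarrow> int) \<Rightarrow> (nat \<Rightarrow> int) \<Rightarrow> nat \<Rightarrow> rat" where
  "bcf_A a b c d n = bcf_prod a b c d n 0 0"

text \<open>Shifted sequence: bcf_S k = s_(k-1), so bcf_S 0 = s_(-1) = 1/d_0.\<close>
fun bcf_S :: "(nat \<Rightarrow> int) \<Rightarrow> (nat \<Rightarrow> int) \<Rightarrow> (nat \<Rightarrow> int) \<Rightarrow> (nat \<Rightarrow> int) \<Rightarrow> nat \<Rightarrow> rat" where
  "bcf_S a b c d 0 = 1 / of_int (d 0)"
| "bcf_S a b c d (Suc 0) = of_int (a 0)"
| "bcf_S a b c d (Suc (Suc 0)) = of_int (a 0 * a 1 * d 1 + b 0 * b 1 * c 1)"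
| "bcf_S a b c d (Suc (Suc (Suc k))) =
     (let m = k + 2 in
        of_int (a m * d m) * bcf_S a b c d (Suc (Suc k))
      + of_int (b m * b (m - 1) * c m * d (m - 1)) * bcf_S a b c d (Suc k)
      + of_int (b m * b (m - 1) * b (m - 2) * d m * d (m - 1) * d (m - 2)) * bcf_S a b c d k)"

definition bcf_s :: "(nat \<Rightarrow> int) \<Rightarrow> (nat \<Rightarrow> int) \<Rightarrow> (nat \<Rightarrow> int) \<Rightarrow> (nat \<Rightarrow> int) \<Rightarrow> nat \<Rightarrow> rat" where
  "bcf_s a b c d n = bcf_S a b c d (Suc n)"

definition bcf_t :: "(nat \<Rightarrow> int) \<Rightarrow> (nat \<Rightarrow> int) \<Rightarrow> nat \<Rightarrow> int" where
  "bcf_t b d n = b 0 * (\<Prod>i = 1..n. b i * d i)"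

end

theory Submission
  imports Defs
begin

text \<open>Multiplying the product by one more matrix shifts its first row and makes the new
  corner entry \<open>\<alpha>\<^sub>n A\<^sub>n\<^sub>-\<^sub>1 + \<beta>\<^sub>n A\<^sub>n\<^sub>-\<^sub>2 + A\<^sub>n\<^sub>-\<^sub>3\<close>. Multiplying this recurrence by
  \<open>t\<^sub>n = t\<^sub>n\<^sub>-\<^sub>1 b\<^sub>n d\<^sub>n\<close> clears the denominators and yields exactly the recurrence
  defining \<open>s\<^sub>n\<close>, so \<open>t\<^sub>n A\<^sub>n\<close> and \<open>s\<^sub>n\<close> agree once the three initial values do.\<close>

lemma nat_induct_three_step [case_names 0 1 2 step]:
  assumes "P 0" and "P (Suc 0)" and "P (Suc (Suc 0))"
    and "\<And>n. P n \<Longrightarrow> P (Suc n) \<Longrightarrow> P (Suc (Suc n)) \<Longrightarrow> P (Suc (Suc (Suc n)))"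
  shows "P n"
proof -
  have "P n \<and> P (Suc n) \<and> P (Suc (Suc n))"
    by (induction n) (use assms in auto)
  then show ?thesis ..
qed

lemma mat3_mult_bcf_matrix:
  "mat3_mult M (bcf_matrix \<alpha> \<beta>) i 0 = \<alpha> * M i 0 + \<beta> * M i (Suc 0) + M i 2"
  "mat3_mult M (bcf_matrix \<alpha> \<beta>) i (Suc 0) = M i 0"
  "mat3_mult M (bcf_matrix \<alpha> \<beta>) i 2 = M i (Suc 0)"
  by (simp_all add: mat3_mult_def bcf_matrix_def numeral_3_eq_3 numeral_2_eq_2 lessThan_Suc)

lemma bcf_prod_Suc_row0:
  "bcf_prod a b c d (Suc n) 0 0 =
     of_int (a (Suc n)) / of_int (b (Suc n)) * bcf_A a b c d n
     + of_int (c (Suc n)) / of_int (d (Suc n)) * bcf_prod a b c d n 0 (Suc 0)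
     + bcf_prod a b c d n 0 2"
  "bcf_prod a b c d (Suc n) 0 (Suc 0) = bcf_A a b c d n"
  "bcf_prod a b c d (Suc n) 0 2 = bcf_prod a b c d n 0 (Suc 0)"
  by (simp_all add: mat3_mult_bcf_matrix bcf_A_def)

lemma bcf_prod_0_row0:
  "bcf_prod a b c d 0 0 j = (if j = 0 then of_int (a 0) / of_int (b 0) else if j = 1 then 1 else 0)"
  by (simp add: bcf_matrix_def)

lemma bcf_A_0: "bcf_A a b c d 0 = of_int (a 0) / of_int (b 0)"
  by (simp add: bcf_A_def bcf_prod_0_row0 del: bcf_prod.simps)

lemma bcf_A_Suc_0:
  "bcf_A a b c d (Suc 0) =
     of_int (a (Suc 0)) / of_int (b (Suc 0)) * bcf_A a b c d 0 + of_int (c (Suc 0)) / of_int (d (Suc 0))"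
  by (simp add: bcf_A_def bcf_prod_Suc_row0 bcf_prod_0_row0 del: bcf_prod.simps)

lemma bcf_A_Suc_Suc_0:
  "bcf_A a b c d (Suc (Suc 0)) =
     of_int (a (Suc (Suc 0))) / of_int (b (Suc (Suc 0))) * bcf_A a b c d (Suc 0)
     + of_int (c (Suc (Suc 0))) / of_int (d (Suc (Suc 0))) * bcf_A a b c d 0 + 1"
  by (simp add: bcf_A_def bcf_prod_Suc_row0 bcf_prod_0_row0 del: bcf_prod.simps)

lemma bcf_A_Suc_Suc_Suc:
  "bcf_A a b c d (Suc (Suc (Suc n))) =
     of_int (a (Suc (Suc (Suc n)))) / of_int (b (Suc (Suc (Suc n)))) * bcf_A a b c d (Suc (Suc n))
     + of_int (c (Suc (Suc (Suc n)))) / of_int (d (Suc (Suc (Suc n)))) * bcf_A a b c d (Suc n)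
     + bcf_A a b c d n"
  by (simp add: bcf_A_def bcf_prod_Suc_row0 del: bcf_prod.simps)

lemma bcf_t_0: "bcf_t b d 0 = b 0"
  by (simp add: bcf_t_def)

lemma bcf_t_Suc: "bcf_t b d (Suc n) = bcf_t b d n * (b (Suc n) * d (Suc n))"
  unfolding bcf_t_def by (simp add: prod.nat_ivl_Suc' mult_ac)

lemma bcf_t_nonzero:
  assumes "\<And>i. b i \<noteq> 0" and "\<And>i. d i \<noteq> 0"
  shows "bcf_t b d n \<noteq> 0"
  using assms by (simp add: bcf_t_def)

theorem mainTheorem2:
  fixes a b c d :: "nat \<Rightarrow> int" and n :: nat
  assumes "\<And>i. b i \<noteq> 0" and "\<And>i. d i \<noteq> 0"
  shows "bcf_A a b c d n = bcf_s a b c d n / of_int (bcf_t b d n)"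
proof (induction n rule: nat_induct_three_step)
  case 0
  show ?case using assms by (simp add: bcf_A_0 bcf_s_def bcf_t_0)
next
  case 1
  show ?case using assms by (simp add: bcf_A_Suc_0 bcf_A_0 bcf_s_def bcf_t_Suc bcf_t_0 field_simps)
next
  case 2
  show ?case using assms
    by (simp add: bcf_A_Suc_Suc_0 bcf_A_Suc_0 bcf_A_0 bcf_s_def bcf_t_Suc bcf_t_0 field_simps)
next
  case (step k)
  have "(of_int (bcf_t b d k) :: rat) \<noteq> 0"
    using bcf_t_nonzero assms by simp
  then show ?case using assms
    unfolding bcf_A_Suc_Suc_Suc step
    by (simp add: bcf_s_def bcf_t_Suc eval_nat_numeral field_simps)
qed

end
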